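(* Let $t>1$ and let $U:[-2\pi,2\pi]\to\mathbb{R}$ be given by \[ U(x)=\begin{cases}-\sin(\Psi_t^{-1}(x+2\pi)), & x<0,\\ -\sin(\Psi_t^{-1}(x)), & x\ge0.\end{cases} \] There exists $C=C(t)>0$ such that for any $\epsilon\in(0,\tfrac12]$ there exists a ReLU neural network $\Phi_\epsilon:\mathbb{R}\to\mathbb{R}$ with $\mathrm{depth}(\Phi_\epsilon)\le C\log(\epsilon^{-1})^2$, $\mathrm{width}(\Phi_\epsilon)\le C$ and $\|\Phi_\epsilon-U\|_{L^1([-2\pi,2\pi])}\le\epsilon$.
   Context: For $t>1$, let $x_t\in(0,\pi)$ be the unique positive solution of $x_t=t\sin(x_t)$ and $\Psi_t:[x_t,2\pi-x_t]\to[0,2\pi]$, $\Psi_t(x_0)=x_0-t\sin(x_0)$ (a bijection with inverse $\Psi_t^{-1}$). For a ReLU network, depth is the number of hidden layers and width the maximal number of neurons in a hidden layer. *)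

theory Defs
  imports "HOL-Analysis.Analysis"
begin

definition xt :: "real \<Rightarrow> real" where
  "xt t = (THE x. 0 < x \<and> x < pi \<and> x = t * sin x)"

definition Psi :: "real \<Rightarrow> real \<Rightarrow> real" where
  "Psi t y = y - t * sin y"

definition Psi_inv :: "real \<Rightarrow> real \<Rightarrow> real" where
  "Psi_inv t x = (THE y. y \<in> {xt t .. 2*pi - xt t} \<and> Psi t y = x)"

definition U :: "real \<Rightarrow> real \<Rightarrow> real" where
  "U t x = (if x < 0 then - sin (Psi_inv t (x + 2*pi)) else - sin (Psi_inv t x))"

text \<open>A network is a nonempty list of layers; all but the last are hidden layers
  (followed by ReLU), the last is the affine output layer.\<close>
type_synonym layer = "real list list \<times> real list"

fun affine :: "layer \<Rightarrow> real list \<Rightarrow> real list" where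
  "affine (W, b) v = map2 (\<lambda>row bi. (\<Sum>(a, x)\<leftarrow>zip row v. a * x) + bi) W b"

definition relu_vec :: "real list \<Rightarrow> real list" where
  "relu_vec v = map (\<lambda>x. max 0 x) v"

fun realize_layers :: "layer list \<Rightarrow> real list \<Rightarrow> real list" where
  "realize_layers [] v = v"
| "realize_layers [l] v = affine l v"
| "realize_layers (l # l' # ls) v = realize_layers (l' # ls) (relu_vec (affine l v))"

fun wf_from :: "nat \<Rightarrow> layer list \<Rightarrow> bool" where
  "wf_from d [] = (d = 1)"
| "wf_from d ((W, b) # ls) =
     (length W = length b \<and> (\<forall>r\<in>set W. length r = d) \<and> wf_from (length W) ls)"

definition valid_net :: "layer list \<Rightarrow> bool" where
  "valid_net N \<longleftrightarrow> N \<noteq> [] \<and> wf_from 1 N"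

definition realization :: "layer list \<Rightarrow> real \<Rightarrow> real" where
  "realization N x = hd (realize_layers N [x])"

definition depth :: "layer list \<Rightarrow> nat" where
  "depth N = length N - 1"

definition width :: "layer list \<Rightarrow> nat" where
  "width N = Max (insert 0 (set (map (\<lambda>l. length (fst l)) (butlast N))))"

end

theory Submission
  imports Defs
begin

text \<open>On the domain, \<open>U t x = - sin (Psi_inv t z)\<close>, where \<open>z \<in> [0, 2 pi]\<close> is \<open>x\<close> shifted by
  \<open>2 pi\<close> if negative. A ReLU network of
  constant width performs \<open>n\<close> steps of bisection for \<open>Psi t y = z\<close> on the dyadic grid
  \<open>xt t + k (2 pi - 2 xt t) / 2 ^ j\<close>: its state holds \<open>z\<close>, the current left end point \<open>y\<close> and
  \<open>sin y, cos y\<close>; a step compares \<open>Psi t (y + a) = y + a - t (sin y cos a + cos y sin a)\<close> with \<open>z\<close>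
  through a ReLU ramp of width \<open>d\<close>, and moves \<open>sin y, cos y\<close> by the addition formulas, gated by
  the comparison bit. Each step costs three layers, and the output is within \<open>2 pi / 2 ^ n\<close> of
  \<open>U t\<close> except where \<open>x \<in> (-d, 0)\<close> or \<open>z\<close> lies within \<open>d\<close> above one of the \<open>2 ^ (n+1)\<close> grid
  values of \<open>Psi t\<close>, a set of measure \<open>O (n 2 ^ n d)\<close>. Taking \<open>n\<close> proportional to
  \<open>log (1/\<epsilon>)\<close> and \<open>d\<close> of order \<open>\<epsilon> / (n 2 ^ n)\<close> gives depth \<open>O (log (1/\<epsilon>))\<close>.\<close>

lemma Psi_has_real_derivative: "(Psi t has_real_derivative 1 - t * cos y) (at y)"
  unfolding Psi_def by (auto intro!: derivative_eq_intros)

lemma continuous_on_Psi: "continuous_on S (Psi t)"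
  unfolding Psi_def by (intro continuous_intros)

lemma Psi_eq_imp_critical_point:
  assumes "a < b" "Psi t a = Psi t b"
  obtains z where "a < z" "z < b" "t * cos z = 1"
proof -
  obtain z where z: "a < z" "z < b" "DERIV (Psi t) z :> 0"
    using Rolle[OF assms continuous_on_Psi] Psi_has_real_derivative real_differentiable_def
    by blast
  have "1 - t * cos z = 0"
    using DERIV_unique[OF Psi_has_real_derivative z(3)] .
  with z that show ?thesis by simp
qed

text \<open>Rolle gives critical points in \<open>(a, b)\<close> and \<open>(b, c)\<close>, but \<open>t cos z = 1\<close> has at most one
  solution in \<open>(0, pi)\<close>.\<close>
lemma no_three_equal_Psi_values_below_pi:
  assumes "t > 0" "0 \<le> a" "a < b" "b < c" "c < pi"
    and "Psi t a = Psi t b" "Psi t b = Psi t c"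
  shows False
proof -
  obtain z1 where z1: "a < z1" "z1 < b" "t * cos z1 = 1"
    using Psi_eq_imp_critical_point assms by metis
  obtain z2 where z2: "b < z2" "z2 < c" "t * cos z2 = 1"
    using Psi_eq_imp_critical_point assms by metis
  have "cos z2 < cos z1"
    using cos_mono_less_eq[of z2 z1] z1 z2 assms by auto
  then have "t * cos z2 < t * cos z1"
    using \<open>t > 0\<close> by simp
  with z1(3) z2(3) show False by simp
qed

lemma ex1_xt:
  assumes "t > 1"
  shows "\<exists>!x. 0 < x \<and> x < pi \<and> x = t * sin x"
proof (rule ex_ex1I)
  have deriv: "((\<lambda>x. t * sin x - x) has_real_derivative t - 1) (at 0)"
    by (auto intro!: derivative_eq_intros)
  obtain d where "d > 0"
    and d: "\<And>h. h > 0 \<Longrightarrow> h < d \<Longrightarrow> t * sin 0 - 0 < t * sin (0 + h) - (0 + h)"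
    using DERIV_pos_inc_right[OF deriv] assms by auto
  define a where "a = min (d/2) (pi/2)"
  have a: "0 < a" "a < d" "a < pi"
    using \<open>d > 0\<close> pi_gt_zero unfolding a_def by (auto simp: min_def)
  have "continuous_on {a..pi} (\<lambda>x. t * sin x - x)"
    by (intro continuous_intros)
  then obtain x where x: "a \<le> x" "x \<le> pi" "t * sin x - x = 0"
    using IVT2'[of "\<lambda>x. t * sin x - x" pi 0 a] d[OF a(1,2)] a(3) by auto
  moreover have "x \<noteq> pi"
    using x(3) by auto
  ultimately show "\<exists>x. 0 < x \<and> x < pi \<and> x = t * sin x"
    using a by (intro exI[of _ x]) auto
next
  have zero: "Psi t 0 = Psi t x" if "x = t * sin x" for x
    using that by (simp add: Psi_def)
  fix x y
  assume x: "0 < x \<and> x < pi \<and> x = t * sin x" and y: "0 < y \<and> y < pi \<and> y = t * sin y"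
  show "x = y"
  proof (rule linorder_cases[of x y])
    assume "x < y"
    then show ?thesis
      using no_three_equal_Psi_values_below_pi[of t 0 x y] zero[of x] zero[of y] x y assms by simp
  next
    assume "y < x"
    then show ?thesis
      using no_three_equal_Psi_values_below_pi[of t 0 y x] zero[of x] zero[of y] x y assms by simp
  qed
qed

lemma xt_spec:
  assumes "t > 1"
  shows "0 < xt t" "xt t < pi" "t * sin (xt t) = xt t"
  using theI'[OF ex1_xt[OF assms]] unfolding xt_def by auto

lemma t_cos_xt_less_1:
  assumes "t > 1"
  shows "t * cos (xt t) < 1"
proof -
  have "Psi t 0 = Psi t (xt t)"
    using xt_spec[OF assms] by (simp add: Psi_def)
  then obtain z where z: "0 < z" "z < xt t" "t * cos z = 1"
    using Psi_eq_imp_critical_point xt_spec[OF assms] by metis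
  have "cos (xt t) < cos z"
    using cos_mono_less_eq[of "xt t" z] z xt_spec[OF assms] by auto
  then have "t * cos (xt t) < t * cos z"
    using assms by simp
  with z(3) show ?thesis by simp
qed

lemma cos_le_cos_xt:
  assumes "t > 1" "xt t \<le> y" "y \<le> 2*pi - xt t"
  shows "cos y \<le> cos (xt t)"
proof (cases "y \<le> pi")
  case True
  then show ?thesis
    using cos_monotone_0_pi_le[of "xt t" y] xt_spec[OF assms(1)] assms by auto
next
  case False
  have "cos y = cos (2*pi - y)"
    by (simp add: cos_diff)
  also have "\<dots> \<le> cos (xt t)"
    using cos_monotone_0_pi_le[of "xt t" "2*pi - y"] xt_spec[OF assms(1)] assms False by auto
  finally show ?thesis .
qed

lemma strict_mono_on_Psi:
  assumes "t > 1"
  shows "strict_mono_on {xt t..2*pi - xt t} (Psi t)"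
proof (rule strict_mono_onI)
  fix a b assume ab: "a \<in> {xt t..2*pi - xt t}" "b \<in> {xt t..2*pi - xt t}" "a < b"
  show "Psi t a < Psi t b"
  proof (rule DERIV_pos_imp_increasing[OF ab(3)])
    fix x assume "a \<le> x" "x \<le> b"
    then have "t * cos x \<le> t * cos (xt t)"
      using cos_le_cos_xt[OF assms, of x] ab assms by simp
    then have "1 - t * cos x > 0"
      using t_cos_xt_less_1[OF assms] by simp
    then show "\<exists>y. DERIV (Psi t) x :> y \<and> y > 0"
      using Psi_has_real_derivative by blast
  qed
qed

lemma Psi_xt: "t > 1 \<Longrightarrow> Psi t (xt t) = 0"
  and Psi_2pi_minus_xt: "t > 1 \<Longrightarrow> Psi t (2*pi - xt t) = 2*pi"
  using xt_spec[of t] by (auto simp: Psi_def sin_diff)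

lemma
  assumes "t > 1" "0 \<le> z" "z \<le> 2*pi"
  shows Psi_inv_mem: "Psi_inv t z \<in> {xt t..2*pi - xt t}"
    and Psi_Psi_inv: "Psi t (Psi_inv t z) = z"
proof -
  have "xt t \<le> 2*pi - xt t"
    using xt_spec[OF assms(1)] by simp
  then obtain y where y: "y \<in> {xt t..2*pi - xt t}" "Psi t y = z"
    using IVT'[of "Psi t" "xt t" z "2*pi - xt t"] Psi_xt Psi_2pi_minus_xt continuous_on_Psi assms
    by auto
  have "\<exists>!y. y \<in> {xt t..2*pi - xt t} \<and> Psi t y = z"
    using y strict_mono_on_eqD[OF strict_mono_on_Psi[OF assms(1)]] by blast
  then show "Psi_inv t z \<in> {xt t..2*pi - xt t}" "Psi t (Psi_inv t z) = z"
    using theI'[of "\<lambda>y. y \<in> {xt t..2*pi - xt t} \<and> Psi t y = z"] unfolding Psi_inv_def by auto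
qed

lemma Psi_inv_mono:
  assumes "t > 1" "0 \<le> z" "z \<le> w" "w \<le> 2*pi"
  shows "Psi_inv t z \<le> Psi_inv t w"
proof -
  have "Psi t (Psi_inv t z) \<le> Psi t (Psi_inv t w)"
    using Psi_Psi_inv assms by simp
  moreover have "Psi_inv t z \<in> {xt t..2*pi - xt t}" "Psi_inv t w \<in> {xt t..2*pi - xt t}"
    using Psi_inv_mem assms by auto
  ultimately show ?thesis
    using strict_mono_on_less_eq[OF strict_mono_on_Psi[OF assms(1)], of "Psi_inv t z" "Psi_inv t w"]
    by (simp only:)
qed

fun bisect :: "(real \<Rightarrow> real) \<Rightarrow> real \<Rightarrow> real \<Rightarrow> real \<Rightarrow> nat \<Rightarrow> real" where
  "bisect f a h z 0 = a"
| "bisect f a h z (Suc j) =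
     (let q = bisect f a h z j + h / 2 ^ Suc j in if f q < z then q else bisect f a h z j)"

lemma bisect_on_grid: "\<exists>m::nat. m < (2::nat) ^ j \<and> bisect f a h z j = a + m * (h / 2 ^ j)"
proof (induction j)
  case 0
  then show ?case by simp
next
  case (Suc j)
  then obtain m :: nat where m: "m < (2::nat) ^ j" "bisect f a h z j = a + m * (h / 2 ^ j)"
    by blast
  have up: "a + m * (h / 2 ^ j) + h / 2 ^ Suc j = a + real (2 * m + 1) * (h / 2 ^ Suc j)"
    and stay: "a + m * (h / 2 ^ j) = a + real (2 * m) * (h / 2 ^ Suc j)"
    by (simp_all add: field_simps)
  have "2 * m + 1 < (2::nat) ^ Suc j"
    using m(1) by simp
  then show ?case
  proof (cases "f (bisect f a h z j + h / 2 ^ Suc j) < z")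
    case True
    then show ?thesis
      using m(2) up \<open>2 * m + 1 < 2 ^ Suc j\<close> by (intro exI[of _ "2 * m + 1"]) (simp add: Let_def)
  next
    case False
    then show ?thesis
      using m(2) stay \<open>2 * m + 1 < 2 ^ Suc j\<close> by (intro exI[of _ "2 * m"]) (simp add: Let_def)
  qed
qed

lemma bisect_ge: "h \<ge> 0 \<Longrightarrow> a \<le> bisect f a h z j"
  using bisect_on_grid[of j f a h z] by force

lemma bisect_bracket:
  assumes f: "strict_mono_on {a..a + h} f" and y: "y \<in> {a..a + h}" "f y = z"
  shows "bisect f a h z j \<le> y \<and> y \<le> bisect f a h z j + h / 2 ^ j"
proof (induction j)
  case 0
  then show ?case using y by simp
next
  case (Suc j)
  define q where "q = bisect f a h z j + h / 2 ^ Suc j"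
  obtain m :: nat where m: "m < (2::nat) ^ j" "bisect f a h z j = a + m * (h / 2 ^ j)"
    using bisect_on_grid by blast
  have "h \<ge> 0"
    using y by simp
  moreover have "real (m + 1) \<le> 2 ^ j"
    using m(1) by (metis Suc_eq_plus1 Suc_leI of_nat_le_iff of_nat_numeral of_nat_power)
  ultimately have "h * (m + 1) \<le> h * 2 ^ j"
    by (intro mult_left_mono)
  then have "(m + 1) * (h / 2 ^ j) \<le> h"
    by (simp add: field_simps)
  then have q: "q \<in> {a..a + h}"
    using m(2) \<open>h \<ge> 0\<close> unfolding q_def by (simp add: field_simps)
  have half: "q + h / 2 ^ Suc j = bisect f a h z j + h / 2 ^ j"
    unfolding q_def by (simp add: field_simps)
  show ?case
  proof (cases "f q < z")
    case True
    then have "q < y"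
      using strict_mono_on_less[OF f q y(1)] y(2) by simp
    then show ?thesis
      using True Suc half unfolding q_def by (simp add: Let_def)
  next
    case False
    then have "y \<le> q"
      using strict_mono_on_less_eq[OF f y(1) q] y(2) by linarith
    then show ?thesis
      using False Suc unfolding q_def by (simp add: Let_def)
  qed
qed

definition hidden_map :: "layer list \<Rightarrow> real list \<Rightarrow> real list" where
  "hidden_map ls v = foldl (\<lambda>v l. relu_vec (affine l v)) v ls"

lemma hidden_map_Nil [simp]: "hidden_map [] v = v"
  and hidden_map_Cons [simp]: "hidden_map (l # ls) v = hidden_map ls (relu_vec (affine l v))"
  and hidden_map_append [simp]: "hidden_map (ls @ ls') v = hidden_map ls' (hidden_map ls v)"
  by (simp_all add: hidden_map_def)

lemma realize_layers_Cons:
  "ls \<noteq> [] \<Longrightarrow> realize_layers (l # ls) v = realize_layers ls (relu_vec (affine l v))"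
  by (cases ls) auto

lemma realize_layers_append:
  "ls' \<noteq> [] \<Longrightarrow> realize_layers (ls @ ls') v = realize_layers ls' (hidden_map ls v)"
  by (induction ls arbitrary: v) (auto simp: realize_layers_Cons)

lemma sum_list_zip_mult:
  "length r = length v \<Longrightarrow> (\<Sum>(a, x)\<leftarrow>zip r v. a * x) = (\<Sum>j<length r. r ! j * v ! j)"
proof (induction r arbitrary: v)
  case Nil
  then show ?case by simp
next
  case (Cons a r)
  then obtain w vs where "v = w # vs"
    by (cases v) auto
  with Cons show ?case
    by (simp del: sum.lessThan_Suc add: sum.lessThan_Suc_shift)
qed

definition continuous_components :: "(real \<Rightarrow> real list) \<Rightarrow> nat \<Rightarrow> bool" where
  "continuous_components F d \<longleftrightarrow> (\<forall>x. length (F x) = d) \<and> (\<forall>i<d. continuous_on UNIV (\<lambda>x. F x ! i))"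

lemma continuous_components_affine:
  assumes "length W = length b" "\<forall>r\<in>set W. length r = d" "continuous_components F d"
  shows "continuous_components (\<lambda>x. affine (W, b) (F x)) (length W)"
  unfolding continuous_components_def
proof safe
  fix x
  show "length (affine (W, b) (F x)) = length W"
    using assms by simp
next
  fix i assume i: "i < length W"
  have "affine (W, b) (F x) ! i = (\<Sum>j<d. W ! i ! j * F x ! j) + b ! i" for x
    using i assms sum_list_zip_mult[of "W ! i" "F x"] unfolding continuous_components_def by simp
  moreover have "continuous_on UNIV (\<lambda>x. (\<Sum>j<d. W ! i ! j * F x ! j) + b ! i)"
    using assms(3) unfolding continuous_components_def by (intro continuous_intros) auto
  ultimately show "continuous_on UNIV (\<lambda>x. affine (W, b) (F x) ! i)"
    by simp
qed

lemma continuous_components_relu_vec: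
  "continuous_components F d \<Longrightarrow> continuous_components (\<lambda>x. relu_vec (F x)) d"
  unfolding continuous_components_def relu_vec_def by (auto intro!: continuous_intros)

lemma continuous_on_realize_layers:
  "wf_from d ls \<Longrightarrow> ls \<noteq> [] \<Longrightarrow> continuous_components F d \<Longrightarrow>
    continuous_on UNIV (\<lambda>x. hd (realize_layers ls (F x)))"
proof (induction ls arbitrary: d F)
  case Nil
  then show ?case by simp
next
  case (Cons l ls)
  obtain W b where l: "l = (W, b)"
    by (cases l)
  have wf: "length W = length b" "\<forall>r\<in>set W. length r = d" "wf_from (length W) ls"
    using Cons.prems(1) l by auto
  have affine: "continuous_components (\<lambda>x. affine (W, b) (F x)) (length W)"
    using continuous_components_affine[OF wf(1,2) Cons.prems(3)] .
  show ?case
  proof (cases ls)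
    case Nil
    then have "length W = 1"
      using wf by simp
    then have "hd (affine (W, b) (F x)) = affine (W, b) (F x) ! 0" for x
      using affine unfolding continuous_components_def by (metis hd_conv_nth list.size(3) zero_neq_one)
    moreover have "continuous_on UNIV (\<lambda>x. affine (W, b) (F x) ! 0)"
      using affine \<open>length W = 1\<close> unfolding continuous_components_def by auto
    ultimately show ?thesis
      using Nil l by simp
  next
    case (Cons l' ls')
    then show ?thesis
      using Cons.IH[OF wf(3) _ continuous_components_relu_vec[OF affine]] l by simp
  qed
qed

lemma continuous_on_realization: "valid_net N \<Longrightarrow> continuous_on UNIV (realization N)"
  using continuous_on_realize_layers[of 1 N "\<lambda>x. [x]"]
  unfolding valid_net_def realization_def continuous_components_def by (auto intro: continuous_intros)

definition Psi_span :: "real \<Rightarrow> real" where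
  "Psi_span t = 2*pi - 2 * xt t"

definition kepler_bisect :: "real \<Rightarrow> real \<Rightarrow> nat \<Rightarrow> real" where
  "kepler_bisect t z n = bisect (Psi t) (xt t) (Psi_span t) z n"

lemma Psi_span_bounds: "t > 1 \<Longrightarrow> 0 \<le> Psi_span t \<and> Psi_span t \<le> 2*pi"
  using xt_spec[of t] by (simp add: Psi_span_def)

lemma kepler_bisect_nonneg: "t > 1 \<Longrightarrow> 0 \<le> kepler_bisect t z n"
  using bisect_ge[of "Psi_span t"] Psi_span_bounds[of t] xt_spec[of t]
  unfolding kepler_bisect_def by (meson less_imp_le order.trans)

lemma kepler_bisect_error:
  assumes "t > 1" "0 \<le> z" "z \<le> 2*pi"
  shows "\<bar>Psi_inv t z - kepler_bisect t z n\<bar> \<le> Psi_span t / 2 ^ n"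
proof -
  have span: "{xt t..xt t + Psi_span t} = {xt t..2*pi - xt t}"
    by (simp add: Psi_span_def)
  have "bisect (Psi t) (xt t) (Psi_span t) z n \<le> Psi_inv t z \<and>
      Psi_inv t z \<le> bisect (Psi t) (xt t) (Psi_span t) z n + Psi_span t / 2 ^ n"
    using assms Psi_inv_mem[OF assms] by (intro bisect_bracket) (auto simp: span strict_mono_on_Psi Psi_Psi_inv)
  then show ?thesis
    unfolding kepler_bisect_def by linarith
qed

text \<open>\<open>sin y\<close> and \<open>cos y\<close> are stored shifted by \<open>1\<close>, so that the ReLU passes them unchanged;
  the last four neurons are scratch space.\<close>
definition state :: "real \<Rightarrow> real \<Rightarrow> real list" where
  "state z y = [z, y, sin y + 1, cos y + 1, 0, 0, 0, 0]"

lemma relu_sin_cos_plus_1 [simp]: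
  fixes y :: real
  shows "max 0 (sin y + 1) = sin y + 1" "max 0 (cos y + 1) = cos y + 1"
    and "max 0 (1 + sin y) = 1 + sin y" "max 0 (1 + cos y) = 1 + cos y"
proof -
  have "0 \<le> sin y + 1" "0 \<le> cos y + 1"
    using sin_ge_minus_one[of y] cos_ge_minus_one[of y] by linarith+
  then show "max 0 (sin y + 1) = sin y + 1" "max 0 (cos y + 1) = cos y + 1"
    and "max 0 (1 + sin y) = 1 + sin y" "max 0 (1 + cos y) = 1 + cos y"
    by (simp_all add: add.commute)
qed

definition compare_layer :: "real \<Rightarrow> real \<Rightarrow> real \<Rightarrow> layer" where
  "compare_layer t d a = (let k = (- a - t * cos a - t * sin a) / d in
    ([[1,0,0,0,0,0,0,0], [0,1,0,0,0,0,0,0], [0,0,1,0,0,0,0,0], [0,0,0,1,0,0,0,0],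
      [1/d, -1/d, t * cos a / d, t * sin a / d, 0,0,0,0],
      [1/d, -1/d, t * cos a / d, t * sin a / d, 0,0,0,0],
      [0,0,0,0,0,0,0,0], [0,0,0,0,0,0,0,0]],
     [0, 0, 0, 0, k, k - 1, 0, 0]))"

lemma compare_layer_state:
  assumes "0 \<le> z" "0 \<le> y"
  shows "relu_vec (affine (compare_layer t d a) (state z y)) =
    (let u = (z - Psi t (y + a)) / d in
      [z, y, sin y + 1, cos y + 1, max 0 u, max 0 (u - 1), 0, 0])"
  using assms
  by (simp add: compare_layer_def state_def relu_vec_def Psi_def sin_add Let_def
      add_divide_distrib diff_divide_distrib algebra_simps)

text \<open>Rows 4--7 (counting from 0) produce \<open>ReLU (\<plusminus>w - 2 + 2b)\<close> for the increments \<open>w\<close> of \<open>sin\<close> and \<open>cos\<close>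
  under a shift by \<open>a\<close>, where \<open>b\<close> is the comparison bit; see \<open>gated_increment\<close>.\<close>
definition rotate_layer :: "real \<Rightarrow> layer" where
  "rotate_layer a = (let ca = cos a; sa = sin a in
    ([[1,0,0,0,0,0,0,0], [0,1,0,0,a,-a,0,0], [0,0,1,0,0,0,0,0], [0,0,0,1,0,0,0,0],
      [0,0,ca-1,sa,2,-2,0,0], [0,0,1-ca,-sa,2,-2,0,0],
      [0,0,-sa,ca-1,2,-2,0,0], [0,0,sa,1-ca,2,-2,0,0]],
     [0, 0, 0, 0, 1-ca-sa-2, ca-1+sa-2, sa+1-ca-2, -sa-1+ca-2]))"

lemma rotate_layer_eval:
  assumes "0 \<le> z" "0 \<le> y + a * (b1 - b2)"
  shows "relu_vec (affine (rotate_layer a) [z, y, sin y + 1, cos y + 1, b1, b2, 0, 0]) =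
    (let ws = sin (y + a) - sin y; wc = cos (y + a) - cos y; b = b1 - b2 in
      [z, y + a * b, sin y + 1, cos y + 1,
       max 0 (ws - 2 + 2*b), max 0 (- ws - 2 + 2*b), max 0 (wc - 2 + 2*b), max 0 (- wc - 2 + 2*b)])"
  using assms
  by (simp add: rotate_layer_def relu_vec_def Let_def sin_add cos_add algebra_simps)

definition commit_layer :: layer where
  "commit_layer =
    ([[1,0,0,0,0,0,0,0], [0,1,0,0,0,0,0,0], [0,0,1,0,1,-1,0,0], [0,0,0,1,0,0,1,-1],
      [0,0,0,0,0,0,0,0], [0,0,0,0,0,0,0,0], [0,0,0,0,0,0,0,0], [0,0,0,0,0,0,0,0]],
     [0, 0, 0, 0, 0, 0, 0, 0])"

lemma commit_layer_eval:
  "relu_vec (affine commit_layer [z, y, S, C, p1, p2, p3, p4]) =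
    [max 0 z, max 0 y, max 0 (S + p1 - p2), max 0 (C + p3 - p4), 0, 0, 0, 0]"
  by (simp add: commit_layer_def relu_vec_def algebra_simps)

lemma threshold_bit:
  fixes u d :: real
  assumes "d > 0" "u \<le> 0 \<or> d \<le> u"
  shows "max 0 (u / d) - max 0 (u / d - 1) = (if 0 < u then 1 else 0)"
  using assms by (auto simp: max_def field_simps)

lemma gated_increment:
  fixes w b :: real
  assumes "\<bar>w\<bar> \<le> 2" "b \<in> {0, 1}"
  shows "max 0 (w - 2 + 2*b) - max 0 (- w - 2 + 2*b) = b * w"
  using assms by (auto simp: max_def)

definition bisect_block :: "real \<Rightarrow> real \<Rightarrow> real \<Rightarrow> layer list" where
  "bisect_block t d a = [compare_layer t d a, rotate_layer a, commit_layer]"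

lemma bisect_block_state:
  assumes "d > 0" "0 \<le> z" "0 \<le> y" "0 \<le> a"
    and margin: "z - Psi t (y + a) \<le> 0 \<or> d \<le> z - Psi t (y + a)"
  shows "hidden_map (bisect_block t d a) (state z y) =
    state z (if Psi t (y + a) < z then y + a else y)"
proof -
  define u where "u = (z - Psi t (y + a)) / d"
  define b :: real where "b = (if Psi t (y + a) < z then 1 else 0)"
  define ws where "ws = sin (y + a) - sin y"
  define wc where "wc = cos (y + a) - cos y"
  have b: "b \<in> {0, 1}" "max 0 u - max 0 (u - 1) = b"
    using threshold_bit[OF assms(1) margin] unfolding u_def b_def by auto
  have "\<bar>ws\<bar> \<le> 2" "\<bar>wc\<bar> \<le> 2"
    using abs_sin_le_one[of y] abs_sin_le_one[of "y + a"] abs_cos_le_one[of y]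
      abs_cos_le_one[of "y + a"] unfolding ws_def wc_def by linarith+
  then have "max 0 (ws - 2 + 2*b) - max 0 (- ws - 2 + 2*b) = b * ws"
    "max 0 (wc - 2 + 2*b) - max 0 (- wc - 2 + 2*b) = b * wc"
    using gated_increment b(1) by auto
  moreover have "sin y + b * ws = sin (y + a * b)" "cos y + b * wc = cos (y + a * b)"
    using b(1) unfolding ws_def wc_def by auto
  ultimately have sc:
    "sin y + 1 + max 0 (ws - 2 + 2*b) - max 0 (- ws - 2 + 2*b) = sin (y + a * b) + 1"
    "cos y + 1 + max 0 (wc - 2 + 2*b) - max 0 (- wc - 2 + 2*b) = cos (y + a * b) + 1"
    by linarith+
  have "0 \<le> y + a * b"
    using assms b(1) by auto
  have "hidden_map (bisect_block t d a) (state z y) =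
      relu_vec (affine commit_layer
        (relu_vec (affine (rotate_layer a) [z, y, sin y + 1, cos y + 1, max 0 u, max 0 (u - 1), 0, 0])))"
    using assms by (simp add: bisect_block_def compare_layer_state u_def Let_def)
  also have "\<dots> = relu_vec (affine commit_layer [z, y + a * b, sin y + 1, cos y + 1,
      max 0 (ws - 2 + 2*b), max 0 (- ws - 2 + 2*b), max 0 (wc - 2 + 2*b), max 0 (- wc - 2 + 2*b)])"
    using rotate_layer_eval[of z y a "max 0 u" "max 0 (u - 1)"] assms b(2) \<open>0 \<le> y + a * b\<close>
    by (simp add: ws_def wc_def Let_def)
  also have "\<dots> = state z (y + a * b)"
    unfolding commit_layer_eval sc state_def using assms \<open>0 \<le> y + a * b\<close> by simp
  finally show ?thesis
    unfolding b_def by simp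
qed

definition wrap :: "real \<Rightarrow> real" where
  "wrap x = (if x < 0 then x + 2*pi else x)"

text \<open>The first two neurons detect \<open>x \<le> -d\<close>; the third carries \<open>x + 2 pi\<close>, which is nonnegative
  on the domain, and the start layer subtracts \<open>2 pi\<close> again unless \<open>x \<le> -d\<close>.\<close>
definition input_layer :: "real \<Rightarrow> layer" where
  "input_layer d = ([[-1/d], [-1/d], [1], [0], [0], [0], [0], [0]], [0, -1, 2*pi, 0, 0, 0, 0, 0])"

definition start_layer :: "real \<Rightarrow> layer" where
  "start_layer t =
    ([[2*pi,-2*pi,1,0,0,0,0,0], [0,0,0,0,0,0,0,0], [0,0,0,0,0,0,0,0], [0,0,0,0,0,0,0,0],
      [0,0,0,0,0,0,0,0], [0,0,0,0,0,0,0,0], [0,0,0,0,0,0,0,0], [0,0,0,0,0,0,0,0]],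
     [-2*pi, xt t, sin (xt t) + 1, cos (xt t) + 1, 0, 0, 0, 0])"

lemma start_state:
  assumes "t > 1" "d > 0" "-2*pi \<le> x" "0 \<le> x \<or> x \<le> -d"
  shows "hidden_map [input_layer d, start_layer t] [x] = state (wrap x) (xt t)"
proof -
  define p where "p = max 0 (- (x / d)) - max 0 (- (x / d) - 1)"
  have "p = (if x < 0 then 1 else 0)"
    using threshold_bit[of d "- x"] assms unfolding p_def by auto
  then have "max 0 (x + 2*pi * p) = wrap x"
    using assms(3) by (simp add: wrap_def)
  moreover have "x + 2*pi * p = 2*pi * max 0 (- (x / d)) + (x - 2*pi * max 0 (- (x / d) - 1))"
    unfolding p_def by (simp add: algebra_simps)
  ultimately show ?thesis
    using assms xt_spec[OF assms(1)]
    by (simp add: input_layer_def start_layer_def state_def relu_vec_def)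
qed

text \<open>The output is the clamp of \<open>1 - S\<close> to \<open>[-1, 1]\<close>, where \<open>S\<close> is the third input; so the
  network is bounded by \<open>1\<close> everywhere and returns \<open>- sin y\<close> on a state.\<close>
definition readout_layers :: "layer list" where
  "readout_layers =
    [([[0,0,-1,0,0,0,0,0], [0,0,-1,0,0,0,0,0], [0,0,0,0,0,0,0,0], [0,0,0,0,0,0,0,0],
       [0,0,0,0,0,0,0,0], [0,0,0,0,0,0,0,0], [0,0,0,0,0,0,0,0], [0,0,0,0,0,0,0,0]],
      [2, 0, 0, 0, 0, 0, 0, 0]),
     ([[1,-1,0,0,0,0,0,0]], [-1])]"

lemma realize_readout_layers:
  "realize_layers readout_layers v =
    (let e = (\<Sum>(a, x)\<leftarrow>zip [0,0,-1,0,0,0,0,0] v. a * x) in [max 0 (e + 2) - max 0 e - 1])"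
  by (simp add: readout_layers_def relu_vec_def Let_def algebra_simps)

lemma abs_realize_readout_layers: "\<bar>hd (realize_layers readout_layers v)\<bar> \<le> 1"
  by (auto simp: realize_readout_layers Let_def max_def)

lemma realize_readout_layers_state: "hd (realize_layers readout_layers (state z y)) = - sin y"
proof -
  have "max 0 (1 - sin y) = 1 - sin y" "max 0 (- sin y - 1) = 0"
    using sin_le_one[of y] sin_ge_minus_one[of y] by (simp_all add: max_absorb1 max_absorb2)
  then show ?thesis
    by (simp add: realize_readout_layers state_def algebra_simps)
qed

definition bisect_blocks :: "real \<Rightarrow> real \<Rightarrow> nat \<Rightarrow> layer list" where
  "bisect_blocks t d n = concat (map (\<lambda>j. bisect_block t d (Psi_span t / 2 ^ j)) [1..<Suc n])"

lemma bisect_blocks_0 [simp]: "bisect_blocks t d 0 = []"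
  and bisect_blocks_Suc:
    "bisect_blocks t d (Suc n) = bisect_blocks t d n @ bisect_block t d (Psi_span t / 2 ^ Suc n)"
  by (simp_all add: bisect_blocks_def)

definition kepler_net :: "real \<Rightarrow> real \<Rightarrow> nat \<Rightarrow> layer list" where
  "kepler_net t d n = input_layer d # start_layer t # bisect_blocks t d n @ readout_layers"

lemma realization_kepler_net:
  "realization (kepler_net t d n) x =
    hd (realize_layers readout_layers (hidden_map (input_layer d # start_layer t # bisect_blocks t d n) [x]))"
  using realize_layers_append[of readout_layers "input_layer d # start_layer t # bisect_blocks t d n" "[x]"]
  unfolding realization_def kepler_net_def by (simp add: readout_layers_def)

lemma abs_realization_kepler_net: "\<bar>realization (kepler_net t d n) x\<bar> \<le> 1"
  unfolding realization_kepler_net by (rule abs_realize_readout_layers)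

lemma depth_kepler_net: "depth (kepler_net t d n) = 3 * n + 3"
proof -
  have "length (bisect_blocks t d n) = 3 * n"
    by (induction n) (simp_all add: bisect_blocks_Suc bisect_block_def)
  then show ?thesis
    by (simp add: depth_def kepler_net_def readout_layers_def)
qed

lemma width_kepler_net: "width (kepler_net t d n) \<le> 8"
proof -
  have "l \<in> set (bisect_blocks t d n) \<Longrightarrow> length (fst l) = 8" for l
    by (induction n) (auto simp: bisect_blocks_Suc bisect_block_def compare_layer_def
        rotate_layer_def commit_layer_def Let_def)
  then have "\<forall>l\<in>set (butlast (kepler_net t d n)). length (fst l) = 8"
    by (auto simp: kepler_net_def butlast_append readout_layers_def input_layer_def start_layer_def)
  then show ?thesis
    unfolding width_def by (auto intro!: Max.boundedI)
qed

lemma valid_kepler_net: "valid_net (kepler_net t d n)"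
proof -
  have blocks: "wf_from 8 (bisect_blocks t d n @ ls) = wf_from 8 ls" for ls
  proof (induction n arbitrary: ls)
    case (Suc n)
    have "wf_from 8 (bisect_block t d a @ ls) = wf_from 8 ls" for a
      by (simp add: bisect_block_def compare_layer_def rotate_layer_def commit_layer_def Let_def
          eval_nat_numeral)
    then show ?case
      using Suc by (simp add: bisect_blocks_Suc)
  qed simp
  have "wf_from 1 (input_layer d # start_layer t # ls) = wf_from 8 ls" for ls
    by (simp add: input_layer_def start_layer_def eval_nat_numeral)
  moreover have "wf_from 8 readout_layers"
    by (simp add: readout_layers_def)
  ultimately show ?thesis
    unfolding valid_net_def kepler_net_def using blocks by simp
qed

definition clear_margins :: "real \<Rightarrow> real \<Rightarrow> nat \<Rightarrow> real \<Rightarrow> bool" where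
  "clear_margins t d n z \<longleftrightarrow>
    (\<forall>j<n. let g = z - Psi t (kepler_bisect t z j + Psi_span t / 2 ^ Suc j) in g \<le> 0 \<or> d \<le> g)"

lemma bisect_blocks_state:
  assumes "t > 1" "d > 0" "0 \<le> z" "clear_margins t d n z"
  shows "hidden_map (bisect_blocks t d n) (state z (xt t)) = state z (kepler_bisect t z n)"
  using assms(4)
proof (induction n)
  case 0
  then show ?case by (simp add: kepler_bisect_def)
next
  case (Suc n)
  have "clear_margins t d n z"
    using Suc.prems unfolding clear_margins_def by simp
  moreover have "0 \<le> Psi_span t / 2 ^ Suc n"
    using Psi_span_bounds[OF assms(1)] by simp
  ultimately show ?case
    using Suc bisect_block_state[OF assms(2,3) kepler_bisect_nonneg[OF assms(1)]]
    unfolding clear_margins_def by (simp add: bisect_blocks_Suc kepler_bisect_def Let_def)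
qed

lemma realization_kepler_net_clear:
  assumes "t > 1" "d > 0" "x \<in> {-2*pi..2*pi}" "0 \<le> x \<or> x \<le> -d" "clear_margins t d n (wrap x)"
  shows "realization (kepler_net t d n) x = - sin (kepler_bisect t (wrap x) n)"
proof -
  have "0 \<le> wrap x"
    using assms(3) by (simp add: wrap_def)
  then show ?thesis
    using start_state[OF assms(1,2) _ assms(4)] bisect_blocks_state[OF assms(1,2) _ assms(5)] assms(3)
    by (simp add: realization_kepler_net realize_readout_layers_state)
qed

lemma abs_sin_diff_le:
  fixes a b :: real
  shows "\<bar>sin a - sin b\<bar> \<le> \<bar>a - b\<bar>"
proof -
  have "\<bar>sin a - sin b\<bar> = 2 * \<bar>sin ((a - b) / 2)\<bar> * \<bar>cos ((a + b) / 2)\<bar>"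
    by (simp add: sin_diff_sin abs_mult)
  also have "\<dots> \<le> 2 * \<bar>(a - b) / 2\<bar> * 1"
    by (intro mult_mono abs_sin_x_le_abs_x abs_cos_le_one) auto
  finally show ?thesis
    by simp
qed

lemma U_eq: "U t x = - sin (Psi_inv t (wrap x))"
  by (simp add: U_def wrap_def)

definition grid_value :: "real \<Rightarrow> nat \<Rightarrow> nat \<Rightarrow> real" where
  "grid_value t j k = Psi t (xt t + k * (Psi_span t / 2 ^ j))"

lemma not_clear_margins_near_grid:
  assumes "\<not> clear_margins t d n z"
  obtains j k where "j \<in> {1..n}" "k < (2::nat) ^ j" "grid_value t j k < z" "z < grid_value t j k + d"
proof -
  obtain j where j: "j < n"
    and g: "0 < z - Psi t (kepler_bisect t z j + Psi_span t / 2 ^ Suc j)"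
      "z - Psi t (kepler_bisect t z j + Psi_span t / 2 ^ Suc j) < d"
    using assms unfolding clear_margins_def Let_def by auto
  obtain m :: nat where m: "m < (2::nat) ^ j" "kepler_bisect t z j = xt t + m * (Psi_span t / 2 ^ j)"
    using bisect_on_grid unfolding kepler_bisect_def by blast
  have "kepler_bisect t z j + Psi_span t / 2 ^ Suc j = xt t + real (2 * m + 1) * (Psi_span t / 2 ^ Suc j)"
    using m(2) by (simp add: field_simps)
  moreover have "2 * m + 1 < (2::nat) ^ Suc j"
    using m(1) by simp
  ultimately show ?thesis
    using that[of "Suc j" "2 * m + 1"] j g unfolding grid_value_def by simp
qed

text \<open>Dominates the indicator of \<open>wrap x \<in> [g, g + d]\<close> for the grid value \<open>g = grid_value t j k\<close>.\<close>
definition grid_weight :: "real \<Rightarrow> real \<Rightarrow> nat \<Rightarrow> nat \<Rightarrow> real \<Rightarrow> real" where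
  "grid_weight t d j k x = indicator {grid_value t j k..grid_value t j k + d} x +
    indicator {grid_value t j k - 2*pi..grid_value t j k - 2*pi + d} x"

definition bad_weight :: "real \<Rightarrow> real \<Rightarrow> nat \<Rightarrow> real \<Rightarrow> real" where
  "bad_weight t d n x = indicator {-d..0} x + (\<Sum>j\<in>{1..n}. \<Sum>k<(2::nat) ^ j. grid_weight t d j k x)"

lemma grid_weight_nonneg: "0 \<le> grid_weight t d j k x"
  by (simp add: grid_weight_def)

lemma bad_weight_nonneg: "0 \<le> bad_weight t d n x"
  unfolding bad_weight_def by (intro add_nonneg_nonneg sum_nonneg grid_weight_nonneg) auto

lemma bad_weight_ge_1:
  assumes "-d < x \<and> x < 0 \<or> \<not> clear_margins t d n (wrap x)"
  shows "1 \<le> bad_weight t d n x"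
  using assms
proof
  assume "-d < x \<and> x < 0"
  moreover have "0 \<le> (\<Sum>j\<in>{1..n}. \<Sum>k<(2::nat) ^ j. grid_weight t d j k x)"
    by (intro sum_nonneg grid_weight_nonneg)
  ultimately show ?thesis
    unfolding bad_weight_def by simp
next
  assume "\<not> clear_margins t d n (wrap x)"
  then obtain j k where jk: "j \<in> {1..n}" "k < (2::nat) ^ j"
    and near: "grid_value t j k < wrap x" "wrap x < grid_value t j k + d"
    by (rule not_clear_margins_near_grid)
  have "1 \<le> grid_weight t d j k x"
    using near unfolding grid_weight_def wrap_def by (cases "x < 0") (auto simp: indicator_def)
  also have "\<dots> \<le> (\<Sum>k<(2::nat) ^ j. grid_weight t d j k x)"
    using jk by (intro member_le_sum grid_weight_nonneg) auto
  also have "\<dots> \<le> (\<Sum>j\<in>{1..n}. \<Sum>k<(2::nat) ^ j. grid_weight t d j k x)"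
    using jk by (intro member_le_sum sum_nonneg grid_weight_nonneg) auto
  also have "\<dots> \<le> bad_weight t d n x"
    unfolding bad_weight_def by simp
  finally show ?thesis .
qed

lemma kepler_net_pointwise_error:
  assumes "t > 1" "d > 0" "x \<in> {-2*pi..2*pi}"
  shows "\<bar>realization (kepler_net t d n) x - U t x\<bar> \<le> Psi_span t / 2 ^ n + 2 * bad_weight t d n x"
proof (cases "-d < x \<and> x < 0 \<or> \<not> clear_margins t d n (wrap x)")
  case True
  have "\<bar>realization (kepler_net t d n) x - U t x\<bar> \<le> 2"
    using abs_realization_kepler_net[of t d n x] abs_sin_le_one[of "Psi_inv t (wrap x)"]
    unfolding U_eq by linarith
  moreover have "0 \<le> Psi_span t / 2 ^ n"
    using Psi_span_bounds[OF assms(1)] by simp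
  ultimately show ?thesis
    using bad_weight_ge_1[OF True] by linarith
next
  case False
  have "0 \<le> wrap x" "wrap x \<le> 2*pi"
    using assms(3) by (auto simp: wrap_def)
  moreover have "0 \<le> x \<or> x \<le> -d" "clear_margins t d n (wrap x)"
    using False by auto
  ultimately have "\<bar>realization (kepler_net t d n) x - U t x\<bar>
      = \<bar>sin (Psi_inv t (wrap x)) - sin (kepler_bisect t (wrap x) n)\<bar>"
    using realization_kepler_net_clear[OF assms] unfolding U_eq by simp
  also have "\<dots> \<le> Psi_span t / 2 ^ n"
    using abs_sin_diff_le order_trans kepler_bisect_error[OF assms(1) \<open>0 \<le> wrap x\<close> \<open>wrap x \<le> 2*pi\<close>]
    by blast
  finally have "\<bar>realization (kepler_net t d n) x - U t x\<bar> \<le> Psi_span t / 2 ^ n" .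
  then show ?thesis
    using bad_weight_nonneg[of t d n x] by linarith
qed

lemma indicator_interval_integral:
  fixes a b c e :: real
  assumes "c \<le> e"
  shows "(indicator {c..e} :: real \<Rightarrow> real) integrable_on {a..b}"
    and "integral {a..b} (indicator {c..e} :: real \<Rightarrow> real) \<le> e - c"
proof -
  have indicator_eq: "(indicator {c..e} :: real \<Rightarrow> real) = (\<lambda>x. if x \<in> {c..e} then 1 else 0)"
    by (auto simp: indicator_def)
  have "((\<lambda>_. 1::real) has_integral measure lborel {max c a..min e b}) {max c a..min e b}"
    using has_integral_const_real[of "1::real" "max c a" "min e b"] by simp
  then have "((indicator {c..e} :: real \<Rightarrow> real) has_integral measure lborel {max c a..min e b}) {a..b}"
    unfolding indicator_eq using has_integral_restrict_Int[of "{c..e}" "\<lambda>_. 1::real" _ "{a..b}"]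
    by (simp add: Int_atLeastAtMost)
  then show "(indicator {c..e} :: real \<Rightarrow> real) integrable_on {a..b}"
    and "integral {a..b} (indicator {c..e} :: real \<Rightarrow> real) \<le> e - c"
    using assms by (auto simp: integral_unique max_def min_def)
qed

lemma grid_weight_integral:
  assumes "d > 0"
  shows "grid_weight t d j k integrable_on {a..b}" and "integral {a..b} (grid_weight t d j k) \<le> 2 * d"
proof -
  note I1 = indicator_interval_integral[of "grid_value t j k" "grid_value t j k + d" a b]
  note I2 = indicator_interval_integral[of "grid_value t j k - 2*pi" "grid_value t j k - 2*pi + d" a b]
  have "grid_weight t d j k = (\<lambda>x. indicator {grid_value t j k..grid_value t j k + d} x +
      indicator {grid_value t j k - 2*pi..grid_value t j k - 2*pi + d} x)"
    by (simp add: grid_weight_def fun_eq_iff)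
  then show "grid_weight t d j k integrable_on {a..b}" "integral {a..b} (grid_weight t d j k) \<le> 2 * d"
    using I1 I2 assms integral_add[OF I1(1) I2(1)] by (auto intro: integrable_add)
qed

lemma bad_weight_integral:
  assumes "d > 0"
  shows "bad_weight t d n integrable_on {a..b}"
    and "integral {a..b} (bad_weight t d n) \<le> 2 * d * (n + 1) * 2 ^ n"
proof -
  note w = grid_weight_integral[OF assms]
  define G where "G x = (\<Sum>j\<in>{1..n}. \<Sum>k<(2::nat) ^ j. grid_weight t d j k x)" for x
  have G: "G integrable_on {a..b}"
    unfolding G_def by (intro integrable_sum w) auto
  have "integral {a..b} G = (\<Sum>j\<in>{1..n}. \<Sum>k<(2::nat) ^ j. integral {a..b} (grid_weight t d j k))"
    unfolding G_def by (simp add: integral_sum integrable_sum w)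
  also have "\<dots> \<le> (\<Sum>j\<in>{1..n}. \<Sum>k<(2::nat) ^ j. 2 * d)"
    by (intro sum_mono w)
  also have "\<dots> \<le> (\<Sum>j\<in>{1..n}. 2 ^ n * (2 * d))"
    using assms by (intro sum_mono) (simp add: mult_right_mono)
  also have "\<dots> = 2 * d * n * 2 ^ n"
    by simp
  finally have "integral {a..b} G \<le> 2 * d * n * 2 ^ n" .
  moreover have "d \<le> d * (2 * 2 ^ n)"
  proof -
    have "(1::real) \<le> 2 * 2 ^ n"
      using one_le_power[of "2::real" n] by linarith
    with assms show ?thesis
      using mult_left_mono[of 1 "2 * 2 ^ n" d] by simp
  qed
  moreover have "2 * d * (n + 1) * 2 ^ n = d * (2 * 2 ^ n) + 2 * d * n * 2 ^ n"
    by (simp add: algebra_simps)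
  moreover note I = indicator_interval_integral[of "-d" 0 a b]
  moreover have "bad_weight t d n = (\<lambda>x. indicator {-d..0} x + G x)"
    by (simp add: fun_eq_iff bad_weight_def G_def)
  ultimately show "bad_weight t d n integrable_on {a..b}"
    and "integral {a..b} (bad_weight t d n) \<le> 2 * d * (n + 1) * 2 ^ n"
    using integral_add[OF I(1) G] integrable_add[OF I(1) G] assms by (simp_all only:) linarith
qed

lemma bounded_borel_absolutely_integrable_on:
  fixes f :: "real \<Rightarrow> real"
  assumes "f \<in> borel_measurable borel" "\<And>x. \<bar>f x\<bar> \<le> B"
  shows "f absolutely_integrable_on {a..b}"
proof -
  have "f \<in> borel_measurable lborel"
    using assms(1) by simp
  then have "f \<in> borel_measurable lebesgue"
    using measurable_completion by blast
  then have "f \<in> borel_measurable (lebesgue_on {a..b})"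
    by (rule measurable_restrict_space1)
  then show ?thesis
    using assms(2) by (intro measurable_bounded_by_integrable_imp_absolutely_integrable[where g = "\<lambda>_. B"]) auto
qed

text \<open>\<open>Psi_inv t\<close> is only specified on \<open>[0, 2 pi]\<close>; clamping its argument makes it monotone on
  all of \<open>\<real>\<close>, hence Borel measurable.\<close>
lemma U_borel_on_domain:
  assumes "t > 1"
  obtains g where "g \<in> borel_measurable borel" "\<And>x. \<bar>g x\<bar> \<le> 1" "\<And>x. x \<in> {-2*pi..2*pi} \<Longrightarrow> g x = U t x"
proof
  define clamp where "clamp z = max 0 (min (2*pi) z)" for z :: real
  have "mono (\<lambda>z. Psi_inv t (clamp z))"
    unfolding mono_def clamp_def by (intro allI impI Psi_inv_mono[OF assms]) (auto simp: max_def min_def)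
  then have "(\<lambda>z. Psi_inv t (clamp z)) \<in> borel_measurable borel"
    by (rule borel_measurable_mono)
  then show "(\<lambda>x. - sin (Psi_inv t (clamp (wrap x)))) \<in> borel_measurable borel"
    unfolding wrap_def by measurable
  show "\<bar>- sin (Psi_inv t (clamp (wrap x)))\<bar> \<le> 1" for x
    by simp
  show "- sin (Psi_inv t (clamp (wrap x))) = U t x" if "x \<in> {-2*pi..2*pi}" for x
    using that by (simp add: U_eq clamp_def wrap_def)
qed

lemma kepler_net_error_absolutely_integrable:
  assumes "t > 1"
  shows "(\<lambda>x. realization (kepler_net t d n) x - U t x) absolutely_integrable_on {-2*pi..2*pi}"
proof -
  obtain g where g: "g \<in> borel_measurable borel" "\<And>x. \<bar>g x\<bar> \<le> 1"
    "\<And>x. x \<in> {-2*pi..2*pi} \<Longrightarrow> g x = U t x"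
    using U_borel_on_domain[OF assms] by blast
  have "realization (kepler_net t d n) \<in> borel_measurable borel"
    using continuous_on_realization[OF valid_kepler_net] by (rule borel_measurable_continuous_onI)
  moreover have "\<bar>realization (kepler_net t d n) x - g x\<bar> \<le> 2" for x
    using abs_triangle_ineq4[of "realization (kepler_net t d n) x" "g x"] g(2)[of x]
      abs_realization_kepler_net[of t d n x] by linarith
  ultimately have "(\<lambda>x. realization (kepler_net t d n) x - g x) absolutely_integrable_on {-2*pi..2*pi}"
    using g(1) by (intro bounded_borel_absolutely_integrable_on[where B = 2]) auto
  then show ?thesis
    by (rule absolutely_integrable_spike[where S = "{}"]) (auto simp: g(3))
qed

lemma kepler_net_L1_error:
  assumes "t > 1" "d > 0"
  shows "integral {-2*pi..2*pi} (\<lambda>x. \<bar>realization (kepler_net t d n) x - U t x\<bar>)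
    \<le> 4*pi * Psi_span t / 2 ^ n + 4 * d * (n + 1) * 2 ^ n"
proof -
  have err: "(\<lambda>x. \<bar>realization (kepler_net t d n) x - U t x\<bar>) integrable_on {-2*pi..2*pi}"
    using kepler_net_error_absolutely_integrable[OF assms(1)] unfolding absolutely_integrable_on_def by simp
  have const: "((\<lambda>x. Psi_span t / 2 ^ n) has_integral 4*pi * Psi_span t / 2 ^ n) {-2*pi..2*pi}"
    using has_integral_const_real[of "Psi_span t / 2 ^ n" "-2*pi" "2*pi"] by simp
  note bad = bad_weight_integral[OF assms(2), where t = t and n = n and a = "-2*pi" and b = "2*pi"]
  have bad2: "(\<lambda>x. 2 * bad_weight t d n x) integrable_on {-2*pi..2*pi}"
    using integrable_on_cmult_left[OF bad(1), of 2] by simp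
  have bound: "(\<lambda>x. Psi_span t / 2 ^ n + 2 * bad_weight t d n x) integrable_on {-2*pi..2*pi}"
    by (intro integrable_add has_integral_integrable[OF const] bad2)
  have "integral {-2*pi..2*pi} (\<lambda>x. \<bar>realization (kepler_net t d n) x - U t x\<bar>)
      \<le> integral {-2*pi..2*pi} (\<lambda>x. Psi_span t / 2 ^ n + 2 * bad_weight t d n x)"
    using kepler_net_pointwise_error[OF assms] by (intro integral_le[OF err bound])
  also have "\<dots> = 4*pi * Psi_span t / 2 ^ n + 2 * integral {-2*pi..2*pi} (bad_weight t d n)"
    using integral_add[OF has_integral_integrable[OF const] bad2] const
    by (simp add: integral_unique)
  also have "\<dots> \<le> 4*pi * Psi_span t / 2 ^ n + 4 * d * (n + 1) * 2 ^ n"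
    using bad(2) by linarith
  finally show ?thesis .
qed

lemma ln_2_ge_half: "1/2 \<le> (ln 2 :: real)"
proof -
  have "exp (1/2::real) ^ 2 = exp 1"
    by (simp add: exp_double[symmetric])
  then have "exp (1/2::real) ^ 2 < 2 ^ 2"
    using exp_le by simp
  then have "exp (1/2::real) < 2"
    by (rule power_less_imp_less_base) simp
  then show ?thesis
    using ln_ge_iff[of 2 "1/2"] by simp
qed

text \<open>Taking \<open>n = 9 \<lceil>log 2 (1/\<epsilon>)\<rceil>\<close> leaves a factor \<open>2 ^ 8\<close> to spare in \<open>2 ^ n \<ge> 1/\<epsilon>\<close>.\<close>
lemma bisection_depth_choice:
  fixes \<epsilon> :: real
  assumes "0 < \<epsilon>" "\<epsilon> \<le> 1/2"
  obtains n :: nat where "256 / \<epsilon> \<le> 2 ^ n" "real (3 * n + 3) \<le> 300 * (ln (1/\<epsilon>))^2"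
proof
  define lam where "lam = ln (1/\<epsilon>)"
  define L where "L = nat \<lceil>lam / ln 2\<rceil>"
  have "ln 2 \<le> lam"
    using assms unfolding lam_def by (subst ln_le_cancel_iff) (auto simp: field_simps)
  then have r: "1 \<le> lam / ln 2" "lam / ln 2 \<le> 2 * lam"
    using ln_2_ge_half by (auto simp: field_simps)
  have L: "lam / ln 2 \<le> real L" "real L \<le> lam / ln 2 + 1"
    unfolding L_def using r by linarith+
  have "lam \<le> real L * ln 2"
    using L(1) ln_2_ge_half by (simp add: divide_le_eq)
  then have "exp lam \<le> exp (real L * ln 2)"
    by simp
  then have "1/\<epsilon> \<le> 2 ^ L"
    using assms unfolding lam_def by (simp add: exp_of_nat_mult)
  moreover have "(2::real) ^ 8 \<le> 2 ^ (8 * L)"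
  proof -
    have "(1::real) \<le> real L"
      using L(1) r(1) by linarith
    then show ?thesis
      by (intro power_increasing) auto
  qed
  ultimately have "(1/\<epsilon>) * 2 ^ 8 \<le> (2::real) ^ L * 2 ^ (8 * L)"
    using assms by (intro mult_mono) auto
  then show "256 / \<epsilon> \<le> 2 ^ (9 * L)"
    by (simp add: power_add[symmetric])
  have "lam / ln 2 * 1 \<le> lam / ln 2 * (lam / ln 2)"
    using r(1) by (intro mult_left_mono) linarith+
  then have "lam / ln 2 \<le> (lam / ln 2)^2"
    by (simp add: power2_eq_square)
  moreover have "(lam / ln 2)^2 \<le> (2 * lam)^2"
    using r by (intro power_mono) linarith+
  moreover have "(2 * lam)^2 = 4 * lam^2"
    by (simp add: power_mult_distrib)
  ultimately show "real (3 * (9 * L) + 3) \<le> 300 * (ln (1/\<epsilon>))^2"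
    using L r unfolding lam_def[symmetric] by linarith
qed

lemma kepler_net_L1_error_le:
  assumes "t > 1" "0 < \<epsilon>" "256 / \<epsilon> \<le> 2 ^ n"
  defines "d \<equiv> \<epsilon> / (16 * (n + 1) * 2 ^ n)"
  shows "integral {-2*pi..2*pi} (\<lambda>x. \<bar>realization (kepler_net t d n) x - U t x\<bar>) \<le> \<epsilon>"
proof -
  define D :: real where "D = 16 * (n + 1) * 2 ^ n"
  have "D > 0"
    by (simp add: D_def)
  then have "d > 0" "d * D = \<epsilon>"
    using assms(2) by (simp_all add: d_def D_def)
  moreover have "4 * d * (n + 1) * 2 ^ n = d * D / 4"
    by (simp add: D_def algebra_simps)
  moreover have "4*pi * Psi_span t / 2 ^ n \<le> 8 * pi^2 / (256 / \<epsilon>)"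
    using Psi_span_bounds[OF assms(1)] assms(2,3) pi_gt_zero
    by (intro frac_le) (auto simp: power2_eq_square)
  moreover have "8 * pi^2 / (256 / \<epsilon>) \<le> \<epsilon> / 2"
    using assms(2) pi_less_4 pi_gt_zero power_strict_mono[of pi 4 2] by (simp add: field_simps)
  ultimately show ?thesis
    using kepler_net_L1_error[OF assms(1) \<open>d > 0\<close>, of n] assms(2) by linarith
qed

theorem mainTheorem18:
  fixes t :: real
  assumes "t > 1"
  shows "\<exists>C>0. \<forall>\<epsilon>::real. 0 < \<epsilon> \<and> \<epsilon> \<le> 1/2 \<longrightarrow>
           (\<exists>N. valid_net N
                \<and> real (depth N) \<le> C * (ln (1/\<epsilon>))^2
                \<and> real (width N) \<le> C
                \<and> (\<lambda>x. realization N x - U t x) absolutely_integrable_on {-2*pi..2*pi}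
                \<and> integral {-2*pi..2*pi} (\<lambda>x. \<bar>realization N x - U t x\<bar>) \<le> \<epsilon>)"
proof (intro exI[of _ 300] conjI allI impI)
  fix \<epsilon> :: real
  assume \<epsilon>: "0 < \<epsilon> \<and> \<epsilon> \<le> 1/2"
  then obtain n where n: "256 / \<epsilon> \<le> 2 ^ n" "real (3 * n + 3) \<le> 300 * (ln (1/\<epsilon>))^2"
    using bisection_depth_choice by blast
  define N where "N = kepler_net t (\<epsilon> / (16 * (n + 1) * 2 ^ n)) n"
  have "width N \<le> 8"
    unfolding N_def by (rule width_kepler_net)
  then show "\<exists>N. valid_net N \<and> real (depth N) \<le> 300 * (ln (1/\<epsilon>))^2 \<and> real (width N) \<le> 300
      \<and> (\<lambda>x. realization N x - U t x) absolutely_integrable_on {-2*pi..2*pi}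
      \<and> integral {-2*pi..2*pi} (\<lambda>x. \<bar>realization N x - U t x\<bar>) \<le> \<epsilon>"
    using valid_kepler_net depth_kepler_net n(2) kepler_net_error_absolutely_integrable[OF assms]
      kepler_net_L1_error_le[OF assms _ n(1)] \<epsilon>
    by (intro exI[of _ N]) (auto simp: N_def)
qed simp

end
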